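(* If $f$ satisfies the rate conditions of order $0$ and $z_1,z_2\in D$ satisfy $z_1\in J_u(z_2,1/L)$, then $\|\pi_x(f(z_1)-f(z_2))\|\ge\xi_{u,1,P}\|\pi_x(z_1-z_2)\|$.
   Context: $c,u,s$ positive integers, $\Lambda=(\mathbb{R}/\mathbb{Z})^c$, $R_\Lambda=\tfrac12$; points are "in the same chart" if their $\lambda$-components have lifts to $\mathbb{R}^c$ at distance $\le R_\Lambda$; differences, norms, cones and derivatives are computed in such lifts. $\overline B_n(R)$ closed ball at $0$; Euclidean norms. $0<R<R_\Lambda/2$, $D=\Lambda\times\overline B_u(R)\times\overline B_s(R)$, $z=(\lambda,x,y)$, projections $\pi_\lambda,\pi_x,\pi_y,\pi_{(\lambda,y)}$; $f:D\to\Lambda\times\mathbb{R}^u\times\mathbb{R}^s$ is $C^1$, $f=(f_\lambda,f_x,f_y)$. $m(A)=\max\{c:\|Av\|\ge c\|v\|\}$, $m(\mathbf A)=\inf_{A\in\mathbf A}m(A)$; $[\partial g/\partial w(U)]$ = set of matrices with $(i,j)$ entry in $[\inf_U\partial g_i/\partial w_j,\sup_U\partial g_i/\partial w_j]$; $P(z)=\{w\in D:\|\pi_\lambda w-\pi_\lambda z\|\le R_\Lambda/2\}$. Fix $L\in(2R/R_\Lambda,1)$. $\mu_{s,1}=\sup_D\{\|\partial_yf_y\|+\frac1L\|\partial_{(\lambda,x)}f_y\|\}$, $\xi_{u,1,P}=\inf_{z\in D}m[\partial_xf_x(P(z))]-\frac1L\sup_D\|\partial_{(\lambda,y)}f_x\|$,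 $\mu_{cs,1}=\sup_D\{\|\partial_{(\lambda,y)}f_{(\lambda,y)}\|+L\|\partial_xf_{(\lambda,y)}\|\}$, $\xi_{cu,1,P}=\inf_{z\in D}m[\partial_{(\lambda,x)}f_{(\lambda,x)}(P(z))]-L\sup_D\|\partial_yf_{(\lambda,x)}\|$. Rate conditions of order $0$: $\mu_{s,1}<1<\xi_{u,1,P}$, $\mu_{cs,1}<\xi_{u,1,P}$, $\mu_{s,1}<\xi_{cu,1,P}$. $J_u(z,M)=\{(\lambda,x,y):\|(\lambda,y)-\pi_{(\lambda,y)}z\|\le M\|x-\pi_xz\|\}$. *)

theory Defs
  imports "HOL-Analysis.Analysis"
begin

text \<open>A point of \<Lambda> x R^u x R^s is represented by a lift
  (l, x, y) in R^c x R^u x R^s; f is represented by a lift F of f to the universal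
  cover, i.e. F(l + k, x, y) - F(l, x, y) lies in Z^c x 0 x 0 for integer vectors k.\<close>

type_synonym ('c, 'u, 's) pt = "(real^'c) \<times> (real^'u) \<times> (real^'s)"

definition RLam :: real where "RLam = 1/2"

definition lam :: "('c::finite, 'u::finite, 's::finite) pt \<Rightarrow> real^'c" where
  "lam z = fst z"
definition px :: "('c::finite, 'u::finite, 's::finite) pt \<Rightarrow> real^'u" where
  "px z = fst (snd z)"
definition py :: "('c::finite, 'u::finite, 's::finite) pt \<Rightarrow> real^'s" where
  "py z = snd (snd z)"

definition Zc :: "(real^'c::finite) set" where
  "Zc = {k. \<forall>i. k $ i \<in> \<int>}"

definition Dl :: "real \<Rightarrow> ('c::finite, 'u::finite, 's::finite) pt set" where
  "Dl R = UNIV \<times> cball 0 R \<times> cball 0 R"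

text \<open>P(z) = {w \<in> D. dist_\<Lambda>(\<lambda>w, \<lambda>z) \<le> R_\<Lambda>/2}, torus distance via lifts.\<close>
definition Pset :: "real \<Rightarrow> ('c::finite, 'u::finite, 's::finite) pt \<Rightarrow> ('c, 'u, 's) pt set" where
  "Pset R z = {w \<in> Dl R. \<exists>k\<in>Zc. norm (lam w - lam z + k) \<le> RLam / 2}"

definition m_mat :: "real^'j::finite^'i::finite \<Rightarrow> real" where
  "m_mat A = Sup {c. \<forall>v. c * norm v \<le> norm (A *v v)}"

definition m_set :: "(real^'j::finite^'i::finite) set \<Rightarrow> real" where
  "m_set S = (INF A\<in>S. m_mat A)"

text \<open>Interval matrix [\<partial>g/\<partial>w(U)] from entry functions E w i j = \<partial>g_i/\<partial>w_j (w).\<close>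
definition interval_mat :: "('p \<Rightarrow> 'i::finite \<Rightarrow> 'j::finite \<Rightarrow> real) \<Rightarrow> 'p set \<Rightarrow> (real^'j^'i) set" where
  "interval_mat E U = {A. \<forall>i j. (INF w\<in>U. E w i j) \<le> A $ i $ j \<and> A $ i $ j \<le> (SUP w\<in>U. E w i j)}"

definition E_xx :: "(('c::finite, 'u::finite, 's::finite) pt \<Rightarrow> ('c, 'u, 's) pt \<Rightarrow>\<^sub>L ('c, 'u, 's) pt)
    \<Rightarrow> ('c, 'u, 's) pt \<Rightarrow> 'u \<Rightarrow> 'u \<Rightarrow> real" where
  "E_xx DF w i j = px (blinfun_apply (DF w) (0, axis j 1, 0)) $ i"

definition dir_lx :: "'c + 'u \<Rightarrow> ('c::finite, 'u::finite, 's::finite) pt" where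
  "dir_lx j = (case j of Inl a \<Rightarrow> (axis a 1, 0, 0) | Inr b \<Rightarrow> (0, axis b 1, 0))"
definition coord_lx :: "('c::finite, 'u::finite, 's::finite) pt \<Rightarrow> 'c + 'u \<Rightarrow> real" where
  "coord_lx p i = (case i of Inl a \<Rightarrow> lam p $ a | Inr b \<Rightarrow> px p $ b)"

definition E_lxlx :: "(('c::finite, 'u::finite, 's::finite) pt \<Rightarrow> ('c, 'u, 's) pt \<Rightarrow>\<^sub>L ('c, 'u, 's) pt)
    \<Rightarrow> ('c, 'u, 's) pt \<Rightarrow> 'c + 'u \<Rightarrow> 'c + 'u \<Rightarrow> real" where
  "E_lxlx DF w i j = coord_lx (blinfun_apply (DF w) (dir_lx j :: ('c, 'u, 's) pt)) i"

text \<open>Rate quantities (operator norms are Euclidean; product norms are Euclidean).\<close>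
definition mu_s1 :: "(('c::finite, 'u::finite, 's::finite) pt \<Rightarrow> ('c, 'u, 's) pt \<Rightarrow>\<^sub>L ('c, 'u, 's) pt)
    \<Rightarrow> real \<Rightarrow> real \<Rightarrow> real" where
  "mu_s1 DF L R = (SUP z\<in>(Dl R :: ('c, 'u, 's) pt set).
      onorm (\<lambda>v::real^'s. py (blinfun_apply (DF z) (0, 0, v)))
      + (1 / L) * onorm (\<lambda>(a::real^'c, b::real^'u). py (blinfun_apply (DF z) (a, b, 0))))"

definition xi_u1P :: "(('c::finite, 'u::finite, 's::finite) pt \<Rightarrow> ('c, 'u, 's) pt \<Rightarrow>\<^sub>L ('c, 'u, 's) pt)
    \<Rightarrow> real \<Rightarrow> real \<Rightarrow> real" where
  "xi_u1P DF L R =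
     (INF z\<in>(Dl R :: ('c, 'u, 's) pt set). m_set (interval_mat (E_xx DF) (Pset R z)))
     - (1 / L) * (SUP z\<in>(Dl R :: ('c, 'u, 's) pt set).
          onorm (\<lambda>(a::real^'c, b::real^'s). px (blinfun_apply (DF z) (a, 0, b))))"

definition mu_cs1 :: "(('c::finite, 'u::finite, 's::finite) pt \<Rightarrow> ('c, 'u, 's) pt \<Rightarrow>\<^sub>L ('c, 'u, 's) pt)
    \<Rightarrow> real \<Rightarrow> real \<Rightarrow> real" where
  "mu_cs1 DF L R = (SUP z\<in>(Dl R :: ('c, 'u, 's) pt set).
      onorm (\<lambda>(a::real^'c, b::real^'s).
         (lam (blinfun_apply (DF z) (a, 0, b)), py (blinfun_apply (DF z) (a, 0, b))))
      + L * onorm (\<lambda>v::real^'u.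
         (lam (blinfun_apply (DF z) (0, v, 0)), py (blinfun_apply (DF z) (0, v, 0)))))"

definition xi_cu1P :: "(('c::finite, 'u::finite, 's::finite) pt \<Rightarrow> ('c, 'u, 's) pt \<Rightarrow>\<^sub>L ('c, 'u, 's) pt)
    \<Rightarrow> real \<Rightarrow> real \<Rightarrow> real" where
  "xi_cu1P DF L R =
     (INF z\<in>(Dl R :: ('c, 'u, 's) pt set). m_set (interval_mat (E_lxlx DF) (Pset R z)))
     - L * (SUP z\<in>(Dl R :: ('c, 'u, 's) pt set).
          onorm (\<lambda>v::real^'s.
             (lam (blinfun_apply (DF z) (0, 0, v)), px (blinfun_apply (DF z) (0, 0, v)))))"

definition rate_conditions_0 :: "(('c::finite, 'u::finite, 's::finite) pt \<Rightarrow> ('c, 'u, 's) pt \<Rightarrow>\<^sub>L ('c, 'u, 's) pt)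
    \<Rightarrow> real \<Rightarrow> real \<Rightarrow> bool" where
  "rate_conditions_0 DF L R \<longleftrightarrow>
     mu_s1 DF L R < 1 \<and> 1 < xi_u1P DF L R \<and>
     mu_cs1 DF L R < xi_u1P DF L R \<and> mu_s1 DF L R < xi_cu1P DF L R"

definition lifted_C1 :: "real \<Rightarrow> (('c::finite, 'u::finite, 's::finite) pt \<Rightarrow> ('c, 'u, 's) pt)
    \<Rightarrow> (('c, 'u, 's) pt \<Rightarrow> ('c, 'u, 's) pt \<Rightarrow>\<^sub>L ('c, 'u, 's) pt) \<Rightarrow> bool" where
  "lifted_C1 R F DF \<longleftrightarrow>
     (\<forall>z\<in>Dl R. (F has_derivative blinfun_apply (DF z)) (at z within Dl R)) \<and>
     continuous_on (Dl R) DF \<and>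
     (\<forall>l x y k. (l, x, y) \<in> Dl R \<longrightarrow> k \<in> Zc \<longrightarrow>
        lam (F (l + k, x, y)) - lam (F (l, x, y)) \<in> Zc \<and>
        px (F (l + k, x, y)) = px (F (l, x, y)) \<and>
        py (F (l + k, x, y)) = py (F (l, x, y)))"

text \<open>J_u(z, M), with \<lambda>-differences taken in lifts at distance \<le> R_\<Lambda> (same chart).\<close>
definition in_Ju :: "('c::finite, 'u::finite, 's::finite) pt \<Rightarrow> ('c, 'u, 's) pt \<Rightarrow> real \<Rightarrow> bool" where
  "in_Ju w z M \<longleftrightarrow> norm (lam w - lam z) \<le> RLam \<and>
     norm (lam w - lam z, py w - py z) \<le> M * norm (px w - px z)"

end

theory Submission
  imports Defs
begin

text \<open>Write \<open>d = z\<^sub>1 - z\<^sub>2\<close>, and let \<open>A\<close> and \<open>r\<close> be the averages, along the segment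
  from \<open>z\<^sub>2\<close> to \<open>z\<^sub>1\<close>, of \<open>\<partial>\<^sub>xf\<^sub>x\<close> and of \<open>\<partial>\<^sub>\<lambda>\<^sub>yf\<^sub>x\<close> applied to the \<open>(\<lambda>, y)\<close>-part of \<open>d\<close>.
  The mean value theorem in integral form gives \<open>\<pi>\<^sub>x(f z\<^sub>1 - f z\<^sub>2) = A \<pi>\<^sub>xd + r\<close>.
  The cone condition bounds the \<open>\<lambda>\<close>-displacement by \<open>R\<^sub>\<Lambda>\<close>, so the segment lies in \<open>P(z)\<close>
  for its midpoint \<open>z\<close>, and an average of matrices along a path in \<open>P(z)\<close> lies in the
  interval matrix \<open>[\<partial>\<^sub>xf\<^sub>x(P(z))]\<close>; hence \<open>\<parallel>A \<pi>\<^sub>xd\<parallel> \<ge> m[\<partial>\<^sub>xf\<^sub>x(P(z))] \<parallel>\<pi>\<^sub>xd\<parallel>\<close>.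
  By the cone condition again, \<open>\<parallel>r\<parallel> \<le> sup \<parallel>\<partial>\<^sub>\<lambda>\<^sub>yf\<^sub>x\<parallel> \<parallel>\<pi>\<^sub>xd\<parallel> / L\<close>. The infima and
  suprema defining \<open>\<xi>\<^sub>u\<^sub>,\<^sub>1\<^sub>,\<^sub>P\<close> are finite because \<open>\<pi>\<^sub>x \<circ> Df\<close> is periodic in \<open>\<lambda>\<close>, hence
  bounded on the non-compact domain \<open>D\<close>.\<close>

section \<open>Norms, lower norms and interval matrices\<close>

lemma norm_Pair_zero: "norm (a, 0::'b::real_normed_vector, b) = norm (a, b)"
  by (simp add: norm_Pair)

lemma norm_px_le: "norm (px p) \<le> norm p"
  unfolding px_def using norm_fst_le[of "fst (snd p)" "snd (snd p)"] norm_snd_le[of "snd p" "fst p"]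
  by simp

lemma bounded_linear_matrix_vector_mult_left: "bounded_linear (\<lambda>A::real^'m::finite^'n::finite. A *v v)"
  unfolding linear_conv_bounded_linear[symmetric]
  by (intro linearI) (simp_all add: matrix_vector_mult_add_rdistrib scaleR_matrix_vector_assoc)

lemma m_mat_nonneg: "0 \<le> m_mat A"
  and m_mat_mult_norm_le: "m_mat A * norm v \<le> norm (A *v v)"
  for A :: "real^'j::finite^'i::finite"
proof -
  define S where "S = {c. \<forall>v. c * norm v \<le> norm (A *v v)}"
  have "0 \<in> S"
    unfolding S_def by simp
  have "bdd_above S"
  proof (rule bdd_aboveI)
    fix c assume "c \<in> S"
    then have "c * norm (axis undefined (1::real) :: real^'j) \<le> norm (A *v axis undefined 1)"
      unfolding S_def by blast
    then show "c \<le> norm (A *v axis undefined 1)"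
      by simp
  qed
  show "0 \<le> m_mat A"
    unfolding m_mat_def S_def[symmetric] using cSup_upper[OF \<open>0 \<in> S\<close> \<open>bdd_above S\<close>] .
  show "m_mat A * norm v \<le> norm (A *v v)"
  proof (cases "v = 0")
    case False
    have "S \<noteq> {}"
      using \<open>0 \<in> S\<close> by blast
    then have "Sup S \<le> norm (A *v v) / norm v"
      by (rule cSup_least) (use False in \<open>auto simp: S_def pos_le_divide_eq\<close>)
    with False show ?thesis
      unfolding m_mat_def S_def[symmetric] by (simp add: pos_le_divide_eq)
  qed simp
qed

lemma m_set_nonneg: "A \<in> S \<Longrightarrow> 0 \<le> m_set S"
  unfolding m_set_def by (rule cINF_greatest) (auto simp: m_mat_nonneg)

lemma m_set_le_m_mat: "A \<in> S \<Longrightarrow> m_set S \<le> m_mat A"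
  unfolding m_set_def by (rule cINF_lower) (auto intro: bdd_belowI[of _ 0] simp: m_mat_nonneg)

lemma INF_le_le_SUP_abs_bounded:
  fixes g :: "'a \<Rightarrow> real"
  assumes "\<And>w. w \<in> U \<Longrightarrow> \<bar>g w\<bar> \<le> B" and "w \<in> U"
  shows "(INF w\<in>U. g w) \<le> g w \<and> g w \<le> (SUP w\<in>U. g w)"
proof -
  have "-B \<le> g w \<and> g w \<le> B" if "w \<in> U" for w
    using assms(1)[OF that] by linarith
  then have "bdd_below (g ` U)" "bdd_above (g ` U)"
    by (auto intro!: bdd_belowI[of _ "-B"] bdd_aboveI[of _ B])
  then show ?thesis
    using assms(2) by (auto intro: cINF_lower cSUP_upper)
qed

lemma vec_lambda_in_interval_mat:
  assumes "\<And>w i j. w \<in> U \<Longrightarrow> \<bar>E w i j\<bar> \<le> B" and "w \<in> U"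
  shows "(\<chi> i j. E w i j) \<in> interval_mat E U"
  unfolding interval_mat_def
proof (intro CollectI allI)
  fix i j
  show "(INF w\<in>U. E w i j) \<le> (\<chi> i j. E w i j) $ i $ j \<and> (\<chi> i j. E w i j) $ i $ j \<le> (SUP w\<in>U. E w i j)"
    using INF_le_le_SUP_abs_bounded[of U "\<lambda>w. E w i j", OF assms] by simp
qed

lemma integral_in_interval_mat:
  fixes E :: "'p \<Rightarrow> 'i::finite \<Rightarrow> 'j::finite \<Rightarrow> real" and \<gamma> :: "real \<Rightarrow> 'p"
  assumes \<gamma>: "\<And>t. t \<in> {0..1} \<Longrightarrow> \<gamma> t \<in> U"
    and cont: "\<And>i j. continuous_on {0..1} (\<lambda>t. E (\<gamma> t) i j)"
    and bound: "\<And>w i j. w \<in> U \<Longrightarrow> \<bar>E w i j\<bar> \<le> B"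
  shows "integral {0..1} (\<lambda>t. \<chi> i j. E (\<gamma> t) i j) \<in> interval_mat E U"
  unfolding interval_mat_def
proof (intro CollectI allI)
  fix i j
  have "(\<lambda>t. \<chi> i j. E (\<gamma> t) i j) integrable_on {0..1}" "(\<lambda>t. \<chi> j. E (\<gamma> t) i j) integrable_on {0..1}"
    by (intro integrable_continuous_interval continuous_on_vec_lambda cont)+
  from integral_linear[OF this(1) bounded_linear_vec_nth, of i]
    integral_linear[OF this(2) bounded_linear_vec_nth, of j]
  have entry: "integral {0..1} (\<lambda>t. \<chi> i j. E (\<gamma> t) i j) $ i $ j = integral {0..1} (\<lambda>t. E (\<gamma> t) i j)"
    by (simp add: o_def)
  have bounds: "(INF w\<in>U. E w i j) \<le> E (\<gamma> t) i j \<and> E (\<gamma> t) i j \<le> (SUP w\<in>U. E w i j)"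
    if "t \<in> {0..1}" for t
    using INF_le_le_SUP_abs_bounded[of U "\<lambda>w. E w i j", OF bound \<gamma>[OF that]] .
  have int: "(\<lambda>t. E (\<gamma> t) i j) integrable_on {0..1}"
    by (rule integrable_continuous_interval[OF cont])
  have "integral {0..1::real} (\<lambda>_. INF w\<in>U. E w i j) \<le> integral {0..1} (\<lambda>t. E (\<gamma> t) i j)"
    by (rule integral_le[OF integrable_const_ivl int]) (use bounds in auto)
  moreover have "integral {0..1} (\<lambda>t. E (\<gamma> t) i j) \<le> integral {0..1::real} (\<lambda>_. SUP w\<in>U. E w i j)"
    by (rule integral_le[OF int integrable_const_ivl]) (use bounds in auto)
  ultimately show "(INF w\<in>U. E w i j) \<le> integral {0..1} (\<lambda>t. \<chi> i j. E (\<gamma> t) i j) $ i $ j \<and>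
      integral {0..1} (\<lambda>t. \<chi> i j. E (\<gamma> t) i j) $ i $ j \<le> (SUP w\<in>U. E w i j)"
    unfolding entry by simp
qed

section \<open>The partial derivatives of \<open>f\<^sub>x\<close> and their boundedness\<close>

definition partial_x_fx ::
    "(('c::finite, 'u::finite, 's::finite) pt \<Rightarrow> ('c, 'u, 's) pt \<Rightarrow>\<^sub>L ('c, 'u, 's) pt)
     \<Rightarrow> ('c, 'u, 's) pt \<Rightarrow> real^'u^'u" where
  "partial_x_fx DF z = (\<chi> i j. E_xx DF z i j)"

definition partial_ly_fx ::
    "(('c::finite, 'u::finite, 's::finite) pt \<Rightarrow> ('c, 'u, 's) pt \<Rightarrow>\<^sub>L ('c, 'u, 's) pt)
     \<Rightarrow> ('c, 'u, 's) pt \<Rightarrow> (real^'c) \<times> (real^'s) \<Rightarrow> real^'u" where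
  "partial_ly_fx DF z = (\<lambda>(a, b). px (DF z (a, 0, b)))"

lemma bounded_linear_partial_ly_fx:
  fixes DF :: "('c::finite, 'u::finite, 's::finite) pt \<Rightarrow> ('c, 'u, 's) pt \<Rightarrow>\<^sub>L ('c, 'u, 's) pt"
  shows "bounded_linear (partial_ly_fx DF z)"
proof -
  have "bounded_linear (\<lambda>p::(real^'c) \<times> (real^'s). DF z (fst p, 0, snd p))"
    by (intro bounded_linear_compose[OF blinfun.bounded_linear_right] bounded_linear_Pair
        bounded_linear_fst bounded_linear_snd bounded_linear_zero)
  then show ?thesis
    unfolding partial_ly_fx_def px_def case_prod_beta'
    by (intro bounded_linear_compose[OF bounded_linear_fst] bounded_linear_compose[OF bounded_linear_snd])
qed

lemma px_DF_eq_partials: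
  fixes DF :: "('c::finite, 'u::finite, 's::finite) pt \<Rightarrow> ('c, 'u, 's) pt \<Rightarrow>\<^sub>L ('c, 'u, 's) pt"
  shows "px (DF z (a, v, b)) = partial_x_fx DF z *v v + partial_ly_fx DF z (a, b)"
proof -
  define g where "g v = px (DF z (0, v, 0))" for v :: "real^'u"
  have "bounded_linear (\<lambda>v::real^'u. DF z (0, v, 0))"
    by (intro bounded_linear_compose[OF blinfun.bounded_linear_right] bounded_linear_Pair
        bounded_linear_ident bounded_linear_zero)
  then have "bounded_linear g"
    unfolding g_def px_def
    by (intro bounded_linear_compose[OF bounded_linear_fst bounded_linear_compose[OF bounded_linear_snd]])
  then have "g v = matrix g *v v"
    by (simp add: matrix_vector_mul(3))
  also have "matrix g = partial_x_fx DF z"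
    unfolding matrix_def partial_x_fx_def E_xx_def g_def ..
  finally have "g v = partial_x_fx DF z *v v" .
  moreover have "DF z (a, v, b) = DF z (0, v, 0) + DF z (a, 0, b)"
    by (simp flip: blinfun.add_right)
  ultimately show ?thesis
    unfolding g_def partial_ly_fx_def px_def by simp
qed

lemma convex_Dl: "convex (Dl R)"
  unfolding Dl_def by (intro convex_Times convex_UNIV convex_cball)

lemma Pset_subset_Dl: "Pset R z \<subseteq> Dl R"
  unfolding Pset_def by auto

lemma zero_in_Zc: "0 \<in> Zc"
  unfolding Zc_def by simp

lemma self_in_Pset: "z \<in> Dl R \<Longrightarrow> z \<in> Pset R z"
  unfolding Pset_def RLam_def using zero_in_Zc by force

lemma midpoint_in_Dl: "z1 \<in> Dl R \<Longrightarrow> z2 \<in> Dl R \<Longrightarrow> midpoint z1 z2 \<in> Dl R"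
  unfolding midpoint_def using convexD[OF convex_Dl, of z1 R z2 "1/2" "1/2"]
  by (simp add: scaleR_add_right)

lemma segment_in_Pset_midpoint:
  assumes "z1 \<in> Dl R" "z2 \<in> Dl R" "norm (lam z1 - lam z2) \<le> RLam" and t: "t \<in> {0..1}"
  shows "z2 + t *\<^sub>R (z1 - z2) \<in> Pset R (midpoint z2 z1)"
proof -
  have "z2 + t *\<^sub>R (z1 - z2) = (1 - t) *\<^sub>R z2 + t *\<^sub>R z1"
    by (simp add: algebra_simps)
  then have "z2 + t *\<^sub>R (z1 - z2) \<in> Dl R"
    using convexD[OF convex_Dl assms(2,1), of "1 - t" t] t by simp
  moreover have "lam (z2 + t *\<^sub>R (z1 - z2)) - lam (midpoint z2 z1) = (t - 1/2) *\<^sub>R (lam z1 - lam z2)"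
    unfolding lam_def midpoint_def by (simp add: scaleR_diff_left scaleR_diff_right scaleR_add_right)
  moreover have "\<bar>t - 1/2\<bar> * norm (lam z1 - lam z2) \<le> 1/2 * RLam"
    using t assms(3) by (intro mult_mono) (auto simp: abs_if)
  ultimately show ?thesis
    unfolding Pset_def using zero_in_Zc by force
qed

lemma px_deriv_periodic_interior:
  fixes F :: "('c::finite, 'u::finite, 's::finite) pt \<Rightarrow> ('c, 'u, 's) pt"
  assumes C: "lifted_C1 R F DF" and k: "k \<in> Zc" and w: "w \<in> UNIV \<times> ball 0 R \<times> ball 0 R"
  shows "px (DF (w + (k, 0, 0)) v) = px (DF w v)"
proof -
  define U :: "('c, 'u, 's) pt set" where "U = UNIV \<times> ball 0 R \<times> ball 0 R"
  have "open U"
    unfolding U_def by (intro open_Times) auto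
  have UD: "U \<subseteq> Dl R"
    unfolding U_def Dl_def by auto
  have wU: "w \<in> U" and shift_U: "\<And>p. p \<in> U \<Longrightarrow> p + (k, 0, 0) \<in> U"
    using w unfolding U_def by auto
  have dF: "(F has_derivative DF p) (at p)" if "p \<in> U" for p
  proof -
    have "(F has_derivative DF p) (at p within U)"
      using C that UD has_derivative_subset unfolding lifted_C1_def by blast
    then show ?thesis
      using at_within_open[OF that \<open>open U\<close>] by simp
  qed
  have "((\<lambda>p. p + (k, 0, 0)) has_derivative id) (at w)"
    unfolding id_def by (rule has_derivative_add_const[OF has_derivative_ident])
  from has_derivative_compose[OF this dF[OF shift_U[OF wU]]]
  have "((\<lambda>p. F (p + (k, 0, 0))) has_derivative DF (w + (k, 0, 0))) (at w)"
    by (simp add: id_def)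
  then have shifted: "((\<lambda>p. px (F (p + (k, 0, 0)))) has_derivative (\<lambda>v. px (DF (w + (k, 0, 0)) v))) (at w)"
    unfolding px_def by (intro has_derivative_fst has_derivative_snd)
  have unshifted: "((\<lambda>p. px (F p)) has_derivative (\<lambda>v. px (DF w v))) (at w)"
    unfolding px_def by (intro has_derivative_fst has_derivative_snd dF[OF wU])
  have periodic: "\<And>l x y. (l, x, y) \<in> Dl R \<Longrightarrow> px (F (l + k, x, y)) = px (F (l, x, y))"
    using C k unfolding lifted_C1_def by blast
  have eq: "px (F (p + (k, 0, 0))) = px (F p)" if "p \<in> U" for p
  proof (cases p)
    case (fields l x y)
    with periodic[of l x y] subsetD[OF UD that] show ?thesis
      by simp
  qed
  have "((\<lambda>p. px (F p)) has_derivative (\<lambda>v. px (DF (w + (k, 0, 0)) v))) (at w)"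
    by (rule has_derivative_transform_within_open[OF shifted \<open>open U\<close> wU eq])
  then have "(\<lambda>v. px (DF (w + (k, 0, 0)) v)) = (\<lambda>v. px (DF w v))"
    using unshifted by (rule has_derivative_unique)
  then show ?thesis
    by (rule fun_cong)
qed

lemma px_deriv_periodic:
  fixes F :: "('c::finite, 'u::finite, 's::finite) pt \<Rightarrow> ('c, 'u, 's) pt"
  assumes C: "lifted_C1 R F DF" and "0 < R" and k: "k \<in> Zc" and w: "w \<in> Dl R"
  shows "px (DF (w + (k, 0, 0)) v) = px (DF w v)"
proof -
  define U :: "('c, 'u, 's) pt set" where "U = UNIV \<times> ball 0 R \<times> ball 0 R"
  have closure_U: "closure U = Dl R"
    unfolding U_def Dl_def closure_Times using \<open>0 < R\<close> by simp
  have cont: "continuous_on (Dl R) DF"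
    using C unfolding lifted_C1_def by blast
  have "continuous_on (Dl R) (\<lambda>p. DF (p + (k, 0, 0)))"
    by (rule continuous_on_compose2[OF cont]) (auto intro!: continuous_intros simp: Dl_def)
  then have "continuous_on (closure U) (\<lambda>p. px (DF (p + (k, 0, 0)) v) - px (DF p v))"
    unfolding closure_U px_def by (intro continuous_intros cont)
  from continuous_constant_on_closure[OF this, of 0 w] px_deriv_periodic_interior[OF C k, of _ v] w closure_U
  show ?thesis
    unfolding U_def by auto
qed

lemma px_deriv_bounded:
  fixes F :: "('c::finite, 'u::finite, 's::finite) pt \<Rightarrow> ('c, 'u, 's) pt"
  assumes C: "lifted_C1 R F DF" and "0 < R"
  obtains B where "\<And>z v. z \<in> Dl R \<Longrightarrow> norm (px (DF z v)) \<le> B * norm v"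
proof -
  define K :: "('c, 'u, 's) pt set" where "K = cbox 0 1 \<times> cball 0 R \<times> cball 0 R"
  have KD: "K \<subseteq> Dl R"
    unfolding K_def Dl_def by auto
  have "compact K"
    unfolding K_def by (intro compact_Times compact_cbox compact_cball)
  moreover have "continuous_on K DF"
    using C KD continuous_on_subset unfolding lifted_C1_def by blast
  ultimately have "bounded (DF ` K)"
    by (intro compact_imp_bounded compact_continuous_image)
  then obtain B where B: "\<And>z. z \<in> K \<Longrightarrow> norm (DF z) \<le> B"
    unfolding bounded_iff by auto
  have "norm (px (DF z v)) \<le> B * norm v" if z: "z \<in> Dl R" for z v
  proof -
    obtain l x y where z_eq: "z = (l, x, y)"
      by (cases z)
    define k :: "real^'c" where "k = (\<chi> i. - of_int \<lfloor>l $ i\<rfloor>)"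
    have k: "k \<in> Zc"
      unfolding Zc_def k_def by auto
    have "l + k \<in> cbox 0 1"
      unfolding k_def mem_box_cart by (simp add: less_imp_le[OF frac_lt_1, unfolded frac_def])
    then have zK: "z + (k, 0, 0) \<in> K"
      using z z_eq unfolding K_def Dl_def by auto
    have "norm (px (DF z v)) = norm (px (DF (z + (k, 0, 0)) v))"
      using px_deriv_periodic[OF C \<open>0 < R\<close> k z] by simp
    also have "\<dots> \<le> norm (DF (z + (k, 0, 0)) v)"
      by (rule norm_px_le)
    also have "\<dots> \<le> norm (DF (z + (k, 0, 0))) * norm v"
      by (rule norm_blinfun)
    also have "\<dots> \<le> B * norm v"
      using B[OF zK] by (simp add: mult_right_mono)
    finally show ?thesis .
  qed
  then show ?thesis
    using that by blast
qed

lemma E_xx_bounded: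
  fixes F :: "('c::finite, 'u::finite, 's::finite) pt \<Rightarrow> ('c, 'u, 's) pt"
  assumes "lifted_C1 R F DF" and "0 < R"
  obtains B where "\<And>w i j. w \<in> Dl R \<Longrightarrow> \<bar>E_xx DF w i j\<bar> \<le> B"
proof -
  obtain B where B: "\<And>z v. z \<in> Dl R \<Longrightarrow> norm (px (DF z v)) \<le> B * norm v"
    using px_deriv_bounded[OF assms] by blast
  have "\<bar>E_xx DF w i j\<bar> \<le> B" if "w \<in> Dl R" for w i j
  proof -
    have "\<bar>E_xx DF w i j\<bar> \<le> norm (px (DF w (0, axis j 1, 0)))"
      unfolding E_xx_def by (rule component_le_norm_cart)
    also have "\<dots> \<le> B"
      using B[OF that, of "(0, axis j 1, 0)"] by (simp add: norm_Pair)
    finally show ?thesis .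
  qed
  then show ?thesis
    by (rule that)
qed

lemma onorm_partial_ly_fx_bounded:
  fixes F :: "('c::finite, 'u::finite, 's::finite) pt \<Rightarrow> ('c, 'u, 's) pt"
  assumes "lifted_C1 R F DF" and "0 < R"
  obtains B where "\<And>w. w \<in> Dl R \<Longrightarrow> onorm (partial_ly_fx DF w) \<le> B"
proof -
  obtain B where B: "\<And>z v. z \<in> Dl R \<Longrightarrow> norm (px (DF z v)) \<le> B * norm v"
    using px_deriv_bounded[OF assms] by blast
  have "onorm (partial_ly_fx DF w) \<le> B" if "w \<in> Dl R" for w
  proof (rule onorm_le)
    fix p :: "(real^'c) \<times> (real^'s)"
    show "norm (partial_ly_fx DF w p) \<le> B * norm p"
    proof (cases p)
      case (Pair a b)
      then show ?thesis
        using B[OF that, of "(a, 0, b)"] unfolding partial_ly_fx_def by (simp add: norm_Pair_zero)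
    qed
  qed
  then show ?thesis
    by (rule that)
qed

section \<open>The expansion estimate\<close>

lemma continuous_on_DF_segment:
  assumes "lifted_C1 R F DF" and "\<And>t. t \<in> {0..1} \<Longrightarrow> z2 + t *\<^sub>R (z1 - z2) \<in> Dl R"
  shows "continuous_on {0..1} (\<lambda>t. DF (z2 + t *\<^sub>R (z1 - z2)))"
proof -
  have "continuous_on (Dl R) DF"
    using assms(1) unfolding lifted_C1_def by blast
  moreover have "continuous_on {0..1} (\<lambda>t. z2 + t *\<^sub>R (z1 - z2))"
    by (intro continuous_intros)
  ultimately show ?thesis
    by (rule continuous_on_compose2) (use assms(2) in auto)
qed

lemma px_increment_eq_mean_partials:
  fixes F :: "('c::finite, 'u::finite, 's::finite) pt \<Rightarrow> ('c, 'u, 's) pt"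
    and z1 z2 :: "('c, 'u, 's) pt"
  defines "\<gamma> \<equiv> \<lambda>t. z2 + t *\<^sub>R (z1 - z2)" and "d \<equiv> z1 - z2"
  assumes C: "lifted_C1 R F DF" and segment: "\<And>t. t \<in> {0..1} \<Longrightarrow> \<gamma> t \<in> Dl R"
  shows "px (F z1) - px (F z2) = integral {0..1} (\<lambda>t. partial_x_fx DF (\<gamma> t)) *v px d
    + integral {0..1} (\<lambda>t. partial_ly_fx DF (\<gamma> t) (lam d, py d))"
proof -
  have cont: "continuous_on {0..1} (\<lambda>t. DF (\<gamma> t))"
    using continuous_on_DF_segment[OF C] segment unfolding \<gamma>_def by blast
  then have cont_x: "continuous_on {0..1} (\<lambda>t. partial_x_fx DF (\<gamma> t))"
    and cont_ly: "continuous_on {0..1} (\<lambda>t. partial_ly_fx DF (\<gamma> t) (lam d, py d))"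
    unfolding partial_x_fx_def E_xx_def partial_ly_fx_def px_def
    by (auto intro!: continuous_intros continuous_on_vec_lambda)
  have "(F has_derivative DF w) (at w within Dl R)" if "w \<in> Dl R" for w
    using C that unfolding lifted_C1_def by blast
  then have "((\<lambda>z. px (F z)) has_derivative (\<lambda>v. px (DF w v))) (at w within Dl R)"
    if "w \<in> Dl R" for w
    unfolding px_def using that by (intro has_derivative_fst has_derivative_snd)
  then have "px (F (z2 + d)) - px (F z2) = integral {0..1} (\<lambda>t. px (DF (\<gamma> t) d))"
    unfolding \<gamma>_def d_def by (rule mvt_integral) (auto intro: segment[unfolded \<gamma>_def])
  also have "\<dots> = integral {0..1} (\<lambda>t. partial_x_fx DF (\<gamma> t) *v px d
      + partial_ly_fx DF (\<gamma> t) (lam d, py d))"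
    using px_DF_eq_partials[of DF _ "lam d" "px d" "py d"] by (simp add: lam_def px_def py_def)
  also have "\<dots> = integral {0..1} (\<lambda>t. partial_x_fx DF (\<gamma> t)) *v px d
      + integral {0..1} (\<lambda>t. partial_ly_fx DF (\<gamma> t) (lam d, py d))"
  proof -
    have "(\<lambda>t. partial_x_fx DF (\<gamma> t)) integrable_on {0..1}"
      by (rule integrable_continuous_interval[OF cont_x])
    from integrable_linear[OF this bounded_linear_matrix_vector_mult_left]
      integral_linear[OF this bounded_linear_matrix_vector_mult_left]
    show ?thesis
      unfolding o_def by (simp add: integral_add integrable_continuous_interval[OF cont_ly])
  qed
  finally show ?thesis
    unfolding d_def by simp
qed

lemma px_increment_lower_bound:
  fixes F :: "('c::finite, 'u::finite, 's::finite) pt \<Rightarrow> ('c, 'u, 's) pt"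
  assumes C: "lifted_C1 R F DF" and "0 < R" and "U \<subseteq> Dl R"
    and segment: "\<And>t. t \<in> {0..1} \<Longrightarrow> z2 + t *\<^sub>R (z1 - z2) \<in> U"
    and m_le: "\<And>A. A \<in> interval_mat (E_xx DF) U \<Longrightarrow> m \<le> m_mat A"
    and onorm_le: "\<And>w. w \<in> U \<Longrightarrow> onorm (partial_ly_fx DF w) \<le> S"
  shows "m * norm (px z1 - px z2) - S * norm (lam z1 - lam z2, py z1 - py z2)
    \<le> norm (px (F z1) - px (F z2))"
proof -
  define d where "d = z1 - z2"
  define \<gamma> where "\<gamma> t = z2 + t *\<^sub>R d" for t
  define A where "A = integral {0..1} (\<lambda>t. partial_x_fx DF (\<gamma> t))"
  define r where "r = integral {0..1} (\<lambda>t. partial_ly_fx DF (\<gamma> t) (lam d, py d))"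
  have \<gamma>_U: "\<gamma> t \<in> U" if "t \<in> {0..1}" for t
    using segment[OF that] unfolding \<gamma>_def d_def .
  then have increment: "px (F z1) - px (F z2) = A *v px d + r"
    unfolding A_def r_def \<gamma>_def d_def
    using px_increment_eq_mean_partials[OF C] \<open>U \<subseteq> Dl R\<close> by blast
  have "continuous_on {0..1} (\<lambda>t. DF (\<gamma> t))"
    using continuous_on_DF_segment[OF C] \<gamma>_U \<open>U \<subseteq> Dl R\<close> unfolding \<gamma>_def d_def by blast
  then have cont_E: "continuous_on {0..1} (\<lambda>t. E_xx DF (\<gamma> t) i j)"
    and cont_ly: "continuous_on {0..1} (\<lambda>t. partial_ly_fx DF (\<gamma> t) (lam d, py d))" for i j
    unfolding E_xx_def partial_ly_fx_def px_def by (auto intro!: continuous_intros)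
  obtain B where B: "\<And>w i j. w \<in> Dl R \<Longrightarrow> \<bar>E_xx DF w i j\<bar> \<le> B"
    using E_xx_bounded[OF C \<open>0 < R\<close>] by blast
  have "A \<in> interval_mat (E_xx DF) U"
    unfolding A_def partial_x_fx_def
    by (rule integral_in_interval_mat[OF \<gamma>_U cont_E B[OF subsetD[OF \<open>U \<subseteq> Dl R\<close>]]])
  then have "m * norm (px d) \<le> m_mat A * norm (px d)"
    by (intro mult_right_mono m_le) simp_all
  moreover have "m_mat A * norm (px d) \<le> norm (A *v px d)"
    by (rule m_mat_mult_norm_le)
  moreover have "norm r \<le> S * norm (lam d, py d)"
  proof -
    have "norm (partial_ly_fx DF (\<gamma> t) (lam d, py d)) \<le> S * norm (lam d, py d)" if "t \<in> {0..1}" for t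
      using onorm[OF bounded_linear_partial_ly_fx, of DF "\<gamma> t" "(lam d, py d)"]
        mult_right_mono[OF onorm_le[OF \<gamma>_U[OF that]] norm_ge_zero[of "(lam d, py d)"]]
      by linarith
    then show ?thesis
      using integral_bound[of 0 1, OF _ cont_ly] unfolding r_def by simp
  qed
  moreover have "norm (A *v px d) - norm r \<le> norm (A *v px d + r)"
    by (rule norm_diff_ineq)
  ultimately have "m * norm (px d) - S * norm (lam d, py d) \<le> norm (px (F z1) - px (F z2))"
    unfolding increment by linarith
  moreover have "px d = px z1 - px z2" "lam d = lam z1 - lam z2" "py d = py z1 - py z2"
    unfolding d_def px_def lam_def py_def by simp_all
  ultimately show ?thesis
    by simp
qed

lemma INF_m_set_le_m_mat:
  fixes F :: "('c::finite, 'u::finite, 's::finite) pt \<Rightarrow> ('c, 'u, 's) pt"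
  assumes "lifted_C1 R F DF" and "0 < R" and "z \<in> Dl R"
    and "A \<in> interval_mat (E_xx DF) (Pset R z)"
  shows "(INF z\<in>Dl R. m_set (interval_mat (E_xx DF) (Pset R z))) \<le> m_mat A"
proof -
  obtain B where B: "\<And>w i j. w \<in> Dl R \<Longrightarrow> \<bar>E_xx DF w i j\<bar> \<le> B"
    using E_xx_bounded[OF assms(1,2)] by blast
  have "0 \<le> m_set (interval_mat (E_xx DF) (Pset R w))" if "w \<in> Dl R" for w
    by (rule m_set_nonneg[OF vec_lambda_in_interval_mat[OF B[OF subsetD[OF Pset_subset_Dl]]
          self_in_Pset[OF that]]])
  then have "bdd_below ((\<lambda>z. m_set (interval_mat (E_xx DF) (Pset R z))) ` Dl R)"
    by (intro bdd_belowI[of _ 0]) auto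
  then have "(INF z\<in>Dl R. m_set (interval_mat (E_xx DF) (Pset R z)))
      \<le> m_set (interval_mat (E_xx DF) (Pset R z))"
    using \<open>z \<in> Dl R\<close> by (rule cINF_lower)
  also have "\<dots> \<le> m_mat A"
    using assms(4) by (rule m_set_le_m_mat)
  finally show ?thesis .
qed

lemma onorm_partial_ly_fx_le_SUP:
  fixes F :: "('c::finite, 'u::finite, 's::finite) pt \<Rightarrow> ('c, 'u, 's) pt"
  assumes "lifted_C1 R F DF" and "0 < R" and "z \<in> Dl R"
  shows "onorm (partial_ly_fx DF z) \<le> (SUP z\<in>Dl R. onorm (partial_ly_fx DF z))"
proof -
  obtain B where "\<And>w. w \<in> Dl R \<Longrightarrow> onorm (partial_ly_fx DF w) \<le> B"
    using onorm_partial_ly_fx_bounded[OF assms(1,2)] by blast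
  then have "bdd_above ((\<lambda>z. onorm (partial_ly_fx DF z)) ` Dl R)"
    by (intro bdd_aboveI[of _ B]) auto
  then show ?thesis
    using \<open>z \<in> Dl R\<close> by (rule cSUP_upper[rotated])
qed

theorem lemma4p5:
  fixes F :: "('c::finite, 'u::finite, 's::finite) pt \<Rightarrow> ('c, 'u, 's) pt"
    and DF :: "('c, 'u, 's) pt \<Rightarrow> ('c, 'u, 's) pt \<Rightarrow>\<^sub>L ('c, 'u, 's) pt"
    and R L :: real and z1 z2 :: "('c, 'u, 's) pt"
  assumes "0 < R" and "R < RLam / 2"
    and "2 * R / RLam < L" and "L < 1"
    and "lifted_C1 R F DF"
    and "rate_conditions_0 DF L R"
    and "z1 \<in> Dl R" and "z2 \<in> Dl R"
    and "in_Ju z1 z2 (1 / L)"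
  shows "norm (px (F z1) - px (F z2)) \<ge> xi_u1P DF L R * norm (px z1 - px z2)"
proof -
  note C = \<open>lifted_C1 R F DF\<close>
  define m where "m = (INF z\<in>Dl R. m_set (interval_mat (E_xx DF) (Pset R z)))"
  define S where "S = (SUP z\<in>Dl R. onorm (partial_ly_fx DF z))"
  define z where "z = midpoint z2 z1"
  have "z \<in> Dl R"
    unfolding z_def using midpoint_in_Dl[OF assms(8,7)] .
  have cone: "norm (lam z1 - lam z2) \<le> RLam"
    "norm (lam z1 - lam z2, py z1 - py z2) \<le> 1 / L * norm (px z1 - px z2)"
    using \<open>in_Ju z1 z2 (1 / L)\<close> unfolding in_Ju_def by auto
  have "m * norm (px z1 - px z2) - S * norm (lam z1 - lam z2, py z1 - py z2)
      \<le> norm (px (F z1) - px (F z2))"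
  proof (rule px_increment_lower_bound[OF C \<open>0 < R\<close> Pset_subset_Dl])
    show "z2 + t *\<^sub>R (z1 - z2) \<in> Pset R z" if "t \<in> {0..1}" for t
      unfolding z_def using segment_in_Pset_midpoint[OF assms(7,8) cone(1) that] .
    show "m \<le> m_mat A" if "A \<in> interval_mat (E_xx DF) (Pset R z)" for A
      unfolding m_def using INF_m_set_le_m_mat[OF C \<open>0 < R\<close> \<open>z \<in> Dl R\<close> that] .
    show "onorm (partial_ly_fx DF w) \<le> S" if "w \<in> Pset R z" for w
      unfolding S_def by (rule onorm_partial_ly_fx_le_SUP[OF C \<open>0 < R\<close> subsetD[OF Pset_subset_Dl that]])
  qed
  moreover have "0 \<le> S"
    unfolding S_def
    using onorm_pos_le[OF bounded_linear_partial_ly_fx]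
      onorm_partial_ly_fx_le_SUP[OF C \<open>0 < R\<close> \<open>z \<in> Dl R\<close>]
    by (rule order_trans)
  ultimately show ?thesis
    unfolding xi_u1P_def m_def[symmetric] S_def[symmetric] partial_ly_fx_def[symmetric]
    using mult_left_mono[OF cone(2) \<open>0 \<le> S\<close>] by (simp add: algebra_simps)
qed

end
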